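(* Let $n>1$ be square-free and let $r,t\in\mathbb{Z}$ with $\gcd(r,n)=1$. Then \[\mathsf{c}(V_n,a_{n,r,t})=\sum_{(d,\ell)}\frac{d}{\kappa(n,r,t)}\,\phi\!\left(\frac{|r|_n}{\ell\,\gcd\left(\kappa(d,r,t),|r|_n\right)}\right),\] where the sum runs over all pairs of positive integers $(d,\ell)$ such that $d\mid n$, $\ell$ divides $\dfrac{|r|_n}{\gcd\left(\kappa(d,r,t),|r|_n\right)}$, and $\gcd\left(r^{\ell\kappa(d,r,t)}-1,\,n\right)=d$.
   Context: $\mathrm{D}_{2n}=\langle u_n,v_n\mid u_n^n=1=v_n^2,\ v_nu_nv_n=u_n^{-1}\rangle$. For integers $r,t$ with $\gcd(r,n)=1$, $a_{n,r,t}$ is the automorphism of $\mathrm{D}_{2n}$ with $u_n^i\mapsto u_n^{ri}$, $u_n^jv_n\mapsto u_n^{rj+t}v_n$. $V_n:=\{u_n^iv_n: 0\leq i\leq n-1\}$, and $\mathsf{c}(V_n,a)$ is the number of cycles (including fixed points) of the permutation induced by $a$ on $V_n$. For $m\geq1$ with $\gcd(r,m)=1$, $|r|_m$ is the multiplicative order of $r$ mod $m$ (so $|r|_1=1$). $S_k(x):=1+x+\cdots+x^{k-1}$ ($S_0=0$), and $\kappa(m,r,t):=\dfrac{m\,|r|_m}{\gcd\left(m,\ t\,S_{|r|_m}(r)\right)}$. $\phi$ is Euler's function. *)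

theory Defs
  imports "HOL-Number_Theory.Number_Theory" "HOL-Computational_Algebra.Squarefree"
begin

text \<open>Elements of D_{2n}: (i, False) stands for u_n^i and (i, True) for u_n^i v_n, 0 \<le> i < n.\<close>
type_synonym dihedral_elem = "int \<times> bool"

definition dihedral_carrier :: "nat \<Rightarrow> dihedral_elem set" where
  "dihedral_carrier n = {0..<int n} \<times> UNIV"

definition dihedral_aut :: "nat \<Rightarrow> int \<Rightarrow> int \<Rightarrow> dihedral_elem \<Rightarrow> dihedral_elem" where
  "dihedral_aut n r t x =
     (if snd x then ((r * fst x + t) mod int n, True) else ((r * fst x) mod int n, False))"

definition V :: "nat \<Rightarrow> dihedral_elem set" where
  "V n = {(i, True) | i. 0 \<le> i \<and> i < int n}"

definition num_cycles :: "'a set \<Rightarrow> ('a \<Rightarrow> 'a) \<Rightarrow> nat" where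
  "num_cycles A f = card ((\<lambda>x. {(f ^^ k) x | k. True}) ` A)"

definition mord :: "nat \<Rightarrow> int \<Rightarrow> nat" where
  "mord m r = (LEAST k. 0 < k \<and> [r ^ k = 1] (mod int m))"

definition S :: "nat \<Rightarrow> int \<Rightarrow> int" where
  "S k x = (\<Sum>i<k. x ^ i)"

definition kappa :: "nat \<Rightarrow> int \<Rightarrow> int \<Rightarrow> nat" where
  "kappa m r t = nat ((int m * int (mord m r)) div gcd (int m) (t * S (mord m r) r))"

end

theory Submission
  imports Defs "HOL-Combinatorics.Orbits"
begin

text \<open>
The automorphism a = a_{n,r,t} acts on V_n as the affine map i |-> r i + t (mod n), so
a^k(i) = r^k i + t S_k(r), and the fixed points of a^k are the solutions of the linear congruence
(r^k - 1) i + t S_k(r) = 0 (mod n): there are g_k = gcd(r^k - 1, n) of them if g_k divides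
t S_k(r), and none otherwise. The period of a on V_n is K = kappa(n,r,t), so Burnside's lemma for
the cyclic group generated by a gives K c(V_n, a) = sum of |Fix(a^k)| over 0 < k <= K.
An exponent k contributes iff kappa(d,r,t) divides k, where d = g_k. Writing k = j kappa(d,r,t),
g_k depends only on gcd(k, |r|_n), hence only on l = gcd(j, M_d) with
M_d = |r|_n / gcd(kappa(d,r,t), |r|_n). Square-freeness of n gives
K = lcm(kappa(d,r,t), |r|_n) = kappa(d,r,t) M_d, so the contributing exponents with given (d, l)
correspond to the j <= M_d with gcd(j, M_d) = l, of which there are phi(M_d / l).
\<close>

section \<open>Geometric sums and multiplicative orders\<close>

lemma S_Suc: "S (Suc k) x = 1 + x * S k x"
  unfolding S_def by (subst sum.lessThan_Suc_shift) (simp add: sum_distrib_left)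

lemma S_geometric: "(x - 1) * S k x = x ^ k - 1"
  by (induction k) (simp_all add: S_def algebra_simps)

lemma S_add: "S (a + b) x = S a x + x ^ a * S b x"
  unfolding S_def by (induction b) (simp_all add: algebra_simps power_add)

lemma S_mult_cong:
  assumes "[x ^ w = 1] (mod m)"
  shows "[S (w * j) x = int j * S w x] (mod m)"
proof (induction j)
  case 0
  then show ?case by (simp add: S_def)
next
  case (Suc j)
  have "S (w * Suc j) x = S (w * j) x + (x ^ w) ^ j * S w x"
    by (simp add: S_add[symmetric] add.commute flip: power_mult)
  moreover have "[(x ^ w) ^ j = 1] (mod m)"
    using cong_pow[OF assms, of j] by simp
  ultimately have "[S (w * Suc j) x = int j * S w x + 1 * S w x] (mod m)"
    using Suc by (metis cong_add cong_mult cong_refl)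
  then show ?case by (simp add: algebra_simps)
qed

lemma cong_pow_eq_1_int_iff_nat:
  assumes "m > 0"
  shows "[r ^ k = 1] (mod int m) \<longleftrightarrow> [nat (r mod int m) ^ k = 1] (mod m)"
proof -
  have "int (nat (r mod int m)) = r mod int m"
    using assms by simp
  then have "[r ^ k = 1] (mod int m) \<longleftrightarrow> [int (nat (r mod int m) ^ k) = int 1] (mod int m)"
    by (simp add: cong_def power_mod)
  then show ?thesis
    by (simp only: cong_int_iff)
qed

lemma coprime_nat_mod_int:
  assumes "m > 0" "coprime r (int m)"
  shows "coprime m (nat (r mod int m))"
proof -
  have "int (nat (r mod int m)) = r mod int m"
    using assms(1) by simp
  moreover have "coprime (r mod int m) (int m)"
    using assms by simp
  ultimately show ?thesis
    by (metis coprime_commute coprime_int_iff)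
qed

lemma mord_eq_ord:
  assumes "m > 0" "coprime r (int m)"
  shows "mord m r = ord m (nat (r mod int m))"
  unfolding mord_def ord_def
  using coprime_nat_mod_int[OF assms] cong_pow_eq_1_int_iff_nat[OF assms(1)] by simp

lemma mord_dvd_iff:
  assumes "m > 0" "coprime r (int m)"
  shows "int m dvd r ^ k - 1 \<longleftrightarrow> mord m r dvd k"
  using mord_eq_ord[OF assms] cong_pow_eq_1_int_iff_nat[OF assms(1)] ord_divides
  by (simp add: cong_iff_dvd_diff)

lemma mord_pos:
  assumes "m > 0" "coprime r (int m)"
  shows "mord m r > 0"
  using mord_eq_ord[OF assms] coprime_nat_mod_int[OF assms] ord_gt_0_iff by simp

lemma coprime_int_dvd:
  assumes "coprime r (int m)" "d dvd m"
  shows "coprime r (int d)"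
  using assms by (meson coprime_divisors dvd_refl int_dvd_int_iff)

lemma mord_dvd_mord:
  assumes "m > 0" "coprime r (int m)" "d dvd m"
  shows "mord d r dvd mord m r"
proof -
  have "d > 0"
    using assms(1,3) by (rule dvd_pos_nat)
  moreover have "int d dvd r ^ mord m r - 1"
    using mord_dvd_iff[OF assms(1,2)] assms(3) by (meson dvd_refl dvd_trans int_dvd_int_iff)
  ultimately show ?thesis
    using mord_dvd_iff coprime_int_dvd[OF assms(2,3)] by blast
qed

lemma dvd_mult_iff_div_gcd_dvd:
  fixes m c j :: int
  assumes "m > 0"
  shows "m dvd j * c \<longleftrightarrow> m div gcd m c dvd j"
proof -
  define g where "g = gcd m c"
  have "g > 0"
    using assms by (simp add: g_def)
  have "coprime (m div g) (c div g)"
    using div_gcd_coprime[of m c] assms by (simp add: g_def)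
  have "m dvd j * c \<longleftrightarrow> m div g * g dvd j * (c div g) * g"
    by (simp add: g_def mult.assoc)
  also have "\<dots> \<longleftrightarrow> m div g dvd j * (c div g)"
    using \<open>g > 0\<close> by simp
  also have "\<dots> \<longleftrightarrow> m div g dvd j"
    using \<open>coprime (m div g) (c div g)\<close> by (simp add: coprime_dvd_mult_left_iff)
  finally show ?thesis
    by (simp add: g_def)
qed

lemma kappa_eq_mord_mult:
  assumes "d > 0"
  shows "kappa d r t = mord d r * nat (int d div gcd (int d) (t * S (mord d r) r))"
proof -
  have "int d * int (mord d r) div gcd (int d) (t * S (mord d r) r)
      = int (mord d r) * (int d div gcd (int d) (t * S (mord d r) r))"
    by (simp add: div_mult_swap mult.commute)
  then show ?thesis
    unfolding kappa_def by (simp add: nat_mult_distrib)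
qed

lemma kappa_pos:
  assumes "d > 0" "coprime r (int d)"
  shows "kappa d r t > 0"
proof -
  have "gcd (int d) (t * S (mord d r) r) \<le> int d"
    using assms(1) by (simp add: zdvd_imp_le)
  then have "int d div gcd (int d) (t * S (mord d r) r) > 0"
    using assms(1) by (simp add: pos_imp_zdiv_pos_iff)
  then show ?thesis
    unfolding kappa_eq_mord_mult[OF assms(1)] using mord_pos[OF assms] by simp
qed

text \<open>Since the k-th iterate of i |-> r i + t is i |-> r^k i + t S_k(r), this says that kappa(d,r,t)
  is the period of that affine map modulo d.\<close>

lemma kappa_dvd_iff:
  assumes "d > 0" "coprime r (int d)"
  shows "int d dvd r ^ k - 1 \<and> int d dvd t * S k r \<longleftrightarrow> kappa d r t dvd k"
proof -
  define w where "w = mord d r"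
  define q where "q = int d div gcd (int d) (t * S w r)"
  have "q > 0"
    using kappa_pos[OF assms, of t] unfolding kappa_eq_mord_mult[OF assms(1)] q_def w_def by simp
  have kappa: "kappa d r t = w * nat q"
    unfolding kappa_eq_mord_mult[OF assms(1)] q_def w_def ..
  have S_dvd_iff: "int d dvd t * S (w * j) r \<longleftrightarrow> nat q dvd j" for j
  proof -
    have "[r ^ w = 1] (mod int d)"
      using mord_dvd_iff[OF assms] by (simp add: w_def cong_iff_dvd_diff)
    then have "[t * S (w * j) r = int j * (t * S w r)] (mod int d)"
      by (metis S_mult_cong cong_scalar_left mult.left_commute)
    then have "int d dvd t * S (w * j) r \<longleftrightarrow> int d dvd int j * (t * S w r)"
      by (rule cong_dvd_iff)
    also have "\<dots> \<longleftrightarrow> q dvd int j"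
      unfolding q_def using assms(1) by (simp add: dvd_mult_iff_div_gcd_dvd)
    finally show ?thesis
      using \<open>q > 0\<close> by (metis int_dvd_int_iff int_nat_eq order_less_le)
  qed
  show ?thesis
  proof (cases "w dvd k")
    case True
    then obtain j where "k = w * j" ..
    then show ?thesis
      using mord_dvd_iff[OF assms] S_dvd_iff[of j] \<open>w dvd k\<close> \<open>q > 0\<close> mord_pos[OF assms]
      by (auto simp: kappa w_def)
  next
    case False
    then show ?thesis
      using mord_dvd_iff[OF assms] by (auto simp: kappa w_def dest: dvd_mult_left)
  qed
qed

lemma kappa_dvd_kappa:
  assumes "m > 0" "coprime r (int m)" "d dvd m"
  shows "kappa d r t dvd kappa m r t"
proof -
  have "d > 0"
    using assms(1,3) by (rule dvd_pos_nat)
  moreover have "int d dvd int m"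
    using assms(3) by simp
  ultimately show ?thesis
    using kappa_dvd_iff[OF assms(1,2), of "kappa m r t" t]
      kappa_dvd_iff[OF _ coprime_int_dvd[OF assms(2,3)], of "kappa m r t" t]
    by (meson dvd_refl dvd_trans)
qed

section \<open>Burnside's lemma for a periodic map\<close>

lemma card_multiples_greaterThanAtMost:
  assumes "p > 0" "p dvd K"
  shows "card {k\<in>{0<..K}. p dvd k} = K div p"
proof -
  have "{k\<in>{0<..K}. p dvd k} = (\<lambda>i. p * i) ` {0<..K div p}"
    using assms by (auto simp: dvd_def image_iff)
  moreover have "inj_on (\<lambda>i. p * i) {0<..K div p}"
    using assms(1) by (auto intro: inj_onI)
  ultimately show ?thesis
    by (simp add: card_image)
qed

lemma funpow_eq_self_iff_dvd:
  assumes "x \<in> orbit f x"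
  shows "(f ^^ k) x = x \<longleftrightarrow> funpow_dist1 f x x dvd k"
proof -
  define p where "p = funpow_dist1 f x x"
  have "(f ^^ p) x = x"
    unfolding p_def using assms by (rule funpow_dist1_prop)
  then have "(f ^^ k) x = (f ^^ (k mod p)) x"
    by (simp add: funpow_mod_eq)
  moreover have "(f ^^ (k mod p)) x \<noteq> x" if "k mod p \<noteq> 0"
    using funpow_dist1_least[of "k mod p" f x x] that by (simp add: p_def)
  ultimately show ?thesis
    unfolding p_def[symmetric] by (metis dvd_eq_mod_eq_0 funpow_0)
qed

lemma card_orbit_eq_funpow_dist1:
  assumes "x \<in> orbit f x"
  shows "card (orbit f x) = funpow_dist1 f x x"
  using orbit_conv_funpow_dist1[OF assms] inj_on_funpow_dist1[OF assms]
  by (simp add: card_image)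

lemma self_in_orbit_if_funpow_eq:
  assumes "(f ^^ K) x = x" "K > 0"
  shows "x \<in> orbit f x"
  using assms unfolding orbit_altdef by (metis (mono_tags, lifting) mem_Collect_eq)

lemma orbit_eq_if_in_orbit:
  assumes "x \<in> orbit f x" "y \<in> orbit f x"
  shows "orbit f y = orbit f x"
  using orbit_cyclic_eq3[of f "orbit f x" y] assms by (auto simp: cyclic_on_def)

lemma orbit_subset_if_image_subset:
  assumes "f ` X \<subseteq> X" "x \<in> X"
  shows "orbit f x \<subseteq> X"
proof
  fix y assume "y \<in> orbit f x"
  then show "y \<in> X"
    by induction (use assms in auto)
qed

lemma card_orbit_dvd_if_funpow_eq:
  assumes "(f ^^ K) x = x" "K > 0"
  shows "card (orbit f x) dvd K"
  using assms funpow_eq_self_iff_dvd[OF self_in_orbit_if_funpow_eq[OF assms]]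
    card_orbit_eq_funpow_dist1[OF self_in_orbit_if_funpow_eq[OF assms]]
  by simp

lemma card_funpow_eq_self_greaterThanAtMost:
  assumes "(f ^^ K) x = x" "K > 0"
  shows "card {k\<in>{0<..K}. (f ^^ k) x = x} = K div card (orbit f x)"
  using card_multiples_greaterThanAtMost[of "funpow_dist1 f x x" K] assms
    funpow_eq_self_iff_dvd[OF self_in_orbit_if_funpow_eq[OF assms]]
    card_orbit_eq_funpow_dist1[OF self_in_orbit_if_funpow_eq[OF assms]]
  by simp

lemma sum_div_card_classes:
  assumes "finite X" "\<And>x. x \<in> X \<Longrightarrow> x \<in> P x" "\<And>x. x \<in> X \<Longrightarrow> P x \<subseteq> X"
    "\<And>x y. x \<in> X \<Longrightarrow> y \<in> P x \<Longrightarrow> P y = P x" "\<And>x. x \<in> X \<Longrightarrow> card (P x) dvd K"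
  shows "(\<Sum>x\<in>X. K div card (P x)) = K * card (P ` X)"
proof -
  have "(\<Sum>x\<in>{x\<in>X. P x = C}. K div card (P x)) = K" if C: "C \<in> P ` X" for C
  proof -
    obtain x where x: "x \<in> X" "C = P x"
      using C by blast
    have "{x\<in>X. P x = C} = C"
      using x assms(2-4) by blast
    then have "(\<Sum>x\<in>{x\<in>X. P x = C}. K div card (P x)) = card C * (K div card C)"
      using x assms(4) by simp
    also have "\<dots> = K"
      using x assms(5) by simp
    finally show ?thesis .
  qed
  then have "(\<Sum>C\<in>P ` X. \<Sum>x\<in>{x\<in>X. P x = C}. K div card (P x)) = K * card (P ` X)"
    by simp
  then show ?thesis
    using sum.image_gen[OF assms(1), of "\<lambda>x. K div card (P x)" P] by simp
qed

lemma num_cycles_eq_card_orbits: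
  assumes "\<And>x. x \<in> X \<Longrightarrow> x \<in> orbit f x"
  shows "num_cycles X f = card (orbit f ` X)"
proof -
  have "(\<lambda>x. {(f ^^ k) x | k. True}) ` X = orbit f ` X"
    using orbit_altdef_self_in[OF assms] by (intro image_cong) simp_all
  then show ?thesis
    unfolding num_cycles_def by simp
qed

lemma Burnside_funpow:
  assumes "finite X" "f ` X \<subseteq> X" "K > 0" "\<And>x. x \<in> X \<Longrightarrow> (f ^^ K) x = x"
  shows "K * num_cycles X f = (\<Sum>k\<in>{0<..K}. card {x\<in>X. (f ^^ k) x = x})"
proof -
  have self_in_orbit: "x \<in> orbit f x" if "x \<in> X" for x
    using assms(4)[OF that] assms(3) by (rule self_in_orbit_if_funpow_eq)
  have "(\<Sum>k\<in>{0<..K}. card {x\<in>X. (f ^^ k) x = x}) = (\<Sum>x\<in>X. card {k\<in>{0<..K}. (f ^^ k) x = x})"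
    using sum.swap_restrict[of "{0<..K}" X "\<lambda>_ _. 1::nat" "\<lambda>k x. (f ^^ k) x = x"] assms(1)
    by simp
  also have "\<dots> = (\<Sum>x\<in>X. K div card (orbit f x))"
    using assms(3,4) by (intro sum.cong refl card_funpow_eq_self_greaterThanAtMost) auto
  also have "\<dots> = K * card (orbit f ` X)"
  proof (rule sum_div_card_classes)
    show "finite X"
      by (rule assms(1))
    show "x \<in> orbit f x" if "x \<in> X" for x
      using that by (rule self_in_orbit)
    show "orbit f x \<subseteq> X" if "x \<in> X" for x
      using assms(2) that by (rule orbit_subset_if_image_subset)
    show "orbit f y = orbit f x" if "x \<in> X" "y \<in> orbit f x" for x y
      using self_in_orbit[OF that(1)] that(2) by (rule orbit_eq_if_in_orbit)
    show "card (orbit f x) dvd K" if "x \<in> X" for x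
      using assms(4)[OF that] assms(3) by (rule card_orbit_dvd_if_funpow_eq)
  qed
  finally show ?thesis
    using num_cycles_eq_card_orbits[of X f, OF self_in_orbit] by simp
qed

section \<open>Fixed points of the automorphism on V_n\<close>

lemma card_residue_class:
  fixes m g c :: int
  assumes "m > 0" "g > 0"
  shows "card {x\<in>{0..<g * m}. x mod m = c mod m} = nat g"
proof -
  have "{x\<in>{0..<g * m}. x mod m = c mod m} = (\<lambda>i. c mod m + m * i) ` {0..<g}"
  proof (intro equalityI subsetI)
    fix x assume "x \<in> {x\<in>{0..<g * m}. x mod m = c mod m}"
    then have x: "0 \<le> x" "x < g * m" "x mod m = c mod m"
      by simp_all
    have x_eq: "x = c mod m + m * (x div m)"
      using mod_mult_div_eq[of x m] x(3) by simp
    have "m * (x div m) \<le> x"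
      using pos_mod_sign[OF assms(1), of x] x_eq x(3) by linarith
    then have "m * (x div m) < m * g"
      using x(2) by (simp add: mult.commute)
    then have "x div m < g"
      using assms(1) by simp
    moreover have "0 \<le> x div m"
      using x(1) assms(1) by (simp add: pos_imp_zdiv_nonneg_iff)
    ultimately show "x \<in> (\<lambda>i. c mod m + m * i) ` {0..<g}"
      using x_eq by (intro image_eqI[of x _ "x div m"]) auto
  next
    fix x assume "x \<in> (\<lambda>i. c mod m + m * i) ` {0..<g}"
    then obtain i where i: "x = c mod m + m * i" "i \<in> {0..<g}"
      by (rule imageE)
    have "m * i \<le> m * (g - 1)"
      using i(2) assms(1) by (intro mult_left_mono) auto
    then have "m * i \<le> m * g - m"
      by (simp add: right_diff_distrib)
    moreover have "0 \<le> m * i"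
      using i(2) assms(1) by simp
    moreover have "0 \<le> c mod m" "c mod m < m"
      using assms(1) by simp_all
    ultimately show "x \<in> {x\<in>{0..<g * m}. x mod m = c mod m}"
      using i(1) by (simp add: mult.commute)
  qed
  moreover have "inj_on (\<lambda>i. c mod m + m * i) {0..<g}"
    using assms(1) by (simp add: inj_on_def)
  ultimately show ?thesis
    by (simp add: card_image)
qed

lemma card_linear_cong_solutions:
  fixes m a b :: int
  assumes "m > 0"
  shows "card {x\<in>{0..<m}. m dvd a * x + b} = (if gcd a m dvd b then nat (gcd a m) else 0)"
proof (cases "gcd a m dvd b")
  case False
  have "\<not> m dvd a * x + b" for x
    using False by (metis dvd_add_right_iff dvd_mult2 dvd_trans gcd_dvd1 gcd_dvd2)
  with False show ?thesis
    by simp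
next
  case True
  define g where "g = gcd a m"
  have "g > 0"
    using assms by (simp add: g_def)
  then have m_eq: "m = g * (m div g)" and "m div g > 0"
    using assms by (simp_all add: g_def pos_imp_zdiv_pos_iff zdvd_imp_le)
  obtain x0 where x0: "[a * x0 = - b] (mod m)"
    using True cong_solve_dvd_int[of a m "- b"] by auto
  have "m dvd a * x + b \<longleftrightarrow> x mod (m div g) = x0 mod (m div g)" for x
  proof -
    have "[a * x + b = (x - x0) * a] (mod m)"
      using x0 by (simp add: cong_iff_dvd_diff algebra_simps)
    then have "m dvd a * x + b \<longleftrightarrow> m dvd (x - x0) * a"
      by (rule cong_dvd_iff)
    also have "\<dots> \<longleftrightarrow> m div g dvd x - x0"
      using assms by (simp add: dvd_mult_iff_div_gcd_dvd g_def gcd.commute)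
    finally show ?thesis
      by (simp add: mod_eq_dvd_iff)
  qed
  then have "{x\<in>{0..<m}. m dvd a * x + b} = {x\<in>{0..<g * (m div g)}. x mod (m div g) = x0 mod (m div g)}"
    using m_eq by simp
  then show ?thesis
    using card_residue_class[OF \<open>m div g > 0\<close> \<open>g > 0\<close>] True by (simp add: g_def)
qed

lemma dihedral_aut_funpow:
  assumes "0 \<le> i" "i < int n"
  shows "(dihedral_aut n r t ^^ k) (i, True) = ((r ^ k * i + t * S k r) mod int n, True)"
proof (induction k)
  case 0
  then show ?case
    using assms by (simp add: S_def)
next
  case (Suc k)
  have "(dihedral_aut n r t ^^ Suc k) (i, True) = dihedral_aut n r t ((r ^ k * i + t * S k r) mod int n, True)"
    using Suc by simp
  also have "\<dots> = ((r * ((r ^ k * i + t * S k r) mod int n) + t) mod int n, True)"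
    by (simp add: dihedral_aut_def)
  also have "(r * ((r ^ k * i + t * S k r) mod int n) + t) mod int n = (r * (r ^ k * i + t * S k r) + t) mod int n"
    by (metis mod_add_left_eq mod_mult_right_eq)
  also have "r * (r ^ k * i + t * S k r) + t = r ^ Suc k * i + t * S (Suc k) r"
    by (simp add: S_Suc algebra_simps)
  finally show ?case .
qed

lemma dihedral_aut_funpow_eq_self_iff:
  assumes "(i, True) \<in> V n"
  shows "(dihedral_aut n r t ^^ k) (i, True) = (i, True) \<longleftrightarrow> int n dvd (r ^ k - 1) * i + t * S k r"
proof -
  have i: "0 \<le> i" "i < int n"
    using assms by (simp_all add: V_def)
  have "(r ^ k * i + t * S k r) mod int n = i \<longleftrightarrow> (r ^ k * i + t * S k r) mod int n = i mod int n"
    using i by simp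
  also have "\<dots> \<longleftrightarrow> int n dvd (r ^ k - 1) * i + t * S k r"
    by (simp add: mod_eq_dvd_iff algebra_simps)
  finally show ?thesis
    using dihedral_aut_funpow[OF i] by simp
qed

lemma card_fixed_points_dihedral_aut_funpow:
  assumes "n > 0"
  shows "card {y\<in>V n. (dihedral_aut n r t ^^ k) y = y} =
    (if gcd (r ^ k - 1) (int n) dvd t * S k r then nat (gcd (r ^ k - 1) (int n)) else 0)"
proof -
  have "{y\<in>V n. (dihedral_aut n r t ^^ k) y = y} =
      (\<lambda>i. (i, True)) ` {i\<in>{0..<int n}. int n dvd (r ^ k - 1) * i + t * S k r}"
    using dihedral_aut_funpow_eq_self_iff by (auto simp: V_def)
  then have "card {y\<in>V n. (dihedral_aut n r t ^^ k) y = y} =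
      card {i\<in>{0..<int n}. int n dvd (r ^ k - 1) * i + t * S k r}"
    by (simp add: card_image inj_on_def)
  then show ?thesis
    using card_linear_cong_solutions[of "int n"] assms by simp
qed

lemma Burnside_dihedral_aut:
  assumes "n > 0" "coprime r (int n)"
  shows "kappa n r t * num_cycles (V n) (dihedral_aut n r t) =
    (\<Sum>k\<in>{k\<in>{0<..kappa n r t}. gcd (r ^ k - 1) (int n) dvd t * S k r}. nat (gcd (r ^ k - 1) (int n)))"
proof -
  have "finite (V n)"
    by (simp add: V_def)
  moreover have "dihedral_aut n r t ` V n \<subseteq> V n"
    using assms(1) by (auto simp: V_def dihedral_aut_def)
  moreover have "(dihedral_aut n r t ^^ kappa n r t) y = y" if y: "y \<in> V n" for y
  proof -
    obtain i where "y = (i, True)"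
      using y unfolding V_def by blast
    moreover have "int n dvd (r ^ kappa n r t - 1) * i + t * S (kappa n r t) r"
      using kappa_dvd_iff[OF assms, of "kappa n r t" t] by simp
    ultimately show ?thesis
      using dihedral_aut_funpow_eq_self_iff y by simp
  qed
  ultimately have "kappa n r t * num_cycles (V n) (dihedral_aut n r t) =
      (\<Sum>k\<in>{0<..kappa n r t}. if gcd (r ^ k - 1) (int n) dvd t * S k r then nat (gcd (r ^ k - 1) (int n)) else 0)"
    using Burnside_funpow[of "V n" "dihedral_aut n r t" "kappa n r t"] kappa_pos[OF assms]
      card_fixed_points_dihedral_aut_funpow[OF assms(1)]
    by simp
  then show ?thesis
    by (simp only: sum.inter_filter finite_greaterThanAtMost)
qed

section \<open>Reindexing the Burnside sum\<close>

lemma gcd_int_eq_if_same_nat_divisors: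
  fixes a b :: int
  assumes "n > 0" "\<And>m. m dvd n \<Longrightarrow> int m dvd a \<longleftrightarrow> int m dvd b"
  shows "gcd a (int n) = gcd b (int n)"
proof -
  have "gcd a (int n) dvd gcd b (int n)"
    if "\<And>m. m dvd n \<Longrightarrow> int m dvd a \<Longrightarrow> int m dvd b" for a b
  proof -
    have "int (nat (gcd a (int n))) = gcd a (int n)"
      by simp
    moreover have "nat (gcd a (int n)) dvd n"
    proof -
      have "int (nat (gcd a (int n))) dvd int n"
        by simp
      then show ?thesis
        by (simp only: int_dvd_int_iff)
    qed
    ultimately show ?thesis
      using that[of "nat (gcd a (int n))"] by simp
  qed
  then have "gcd a (int n) dvd gcd b (int n)" "gcd b (int n) dvd gcd a (int n)"
    using assms(2) by blast+
  then show ?thesis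
    by (intro zdvd_antisym_nonneg) simp_all
qed

lemma gcd_pow_minus_one_eq_gcd_mord:
  assumes "n > 0" "coprime r (int n)"
  shows "gcd (r ^ a - 1) (int n) = gcd (r ^ gcd a (mord n r) - 1) (int n)"
proof (rule gcd_int_eq_if_same_nat_divisors[OF assms(1)])
  fix m assume "m dvd n"
  have "m > 0"
    using assms(1) \<open>m dvd n\<close> by (rule dvd_pos_nat)
  moreover have "coprime r (int m)"
    using assms(2) \<open>m dvd n\<close> by (rule coprime_int_dvd)
  moreover have "mord m r dvd mord n r"
    using assms \<open>m dvd n\<close> by (rule mord_dvd_mord)
  ultimately show "int m dvd r ^ a - 1 \<longleftrightarrow> int m dvd r ^ gcd a (mord n r) - 1"
    by (simp add: mord_dvd_iff)
qed

lemma gcd_mult_eq_gcd_gcd_div_gcd_mult: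
  fixes j c w :: nat
  shows "gcd (j * c) w = gcd (gcd j (w div gcd c w) * c) w"
proof (cases "c = 0 \<and> w = 0")
  case False
  define g where "g = gcd c w"
  have "g > 0"
    using False by (auto simp: g_def)
  obtain a b where a: "c = g * a" and b: "w = g * b"
    unfolding g_def by (meson gcd_dvd1 gcd_dvd2 dvdE)
  have "coprime (c div g) (w div g)"
    using div_gcd_coprime[of c w] False by (simp add: g_def)
  moreover have "c div g = a" "w div g = b"
    using \<open>g > 0\<close> by (simp_all add: a b)
  ultimately have "coprime a b"
    by simp
  have "gcd (j * c) w = g * gcd (j * a) b"
    by (simp add: a b gcd_mult_distrib_nat ac_simps)
  also have "\<dots> = g * gcd j b"
    using \<open>coprime a b\<close> by (simp add: gcd_mult_left_right_cancel coprime_commute)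
  also have "\<dots> = g * gcd (gcd j b * a) b"
    using \<open>coprime a b\<close> by (simp add: gcd_mult_left_right_cancel coprime_commute)
  also have "\<dots> = gcd (gcd j (w div g) * c) w"
    using \<open>g > 0\<close> by (simp add: a b gcd_mult_distrib_nat ac_simps)
  finally show ?thesis
    by (simp add: g_def)
qed auto

lemma gcd_pow_mult_minus_one:
  assumes "n > 0" "coprime r (int n)"
  shows "gcd (r ^ (j * c) - 1) (int n) =
    gcd (r ^ (gcd j (mord n r div gcd c (mord n r)) * c) - 1) (int n)"
proof -
  have "gcd (r ^ (j * c) - 1) (int n) = gcd (r ^ gcd (j * c) (mord n r) - 1) (int n)"
    by (rule gcd_pow_minus_one_eq_gcd_mord[OF assms])
  also have "gcd (j * c) (mord n r) = gcd (gcd j (mord n r div gcd c (mord n r)) * c) (mord n r)"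
    by (rule gcd_mult_eq_gcd_gcd_div_gcd_mult)
  also have "gcd (r ^ \<dots> - 1) (int n) =
      gcd (r ^ (gcd j (mord n r div gcd c (mord n r)) * c) - 1) (int n)"
    by (rule gcd_pow_minus_one_eq_gcd_mord[OF assms, symmetric])
  finally show ?thesis .
qed

lemma squarefree_imp_coprime_div:
  fixes n u :: "'a :: semiring_gcd"
  assumes "squarefree n" "u dvd n"
  shows "coprime u (n div u)"
proof (rule coprimeI)
  fix c assume "c dvd u" "c dvd n div u"
  then have "c ^ 2 dvd u * (n div u)"
    by (simp add: power2_eq_square mult_dvd_mono)
  then show "is_unit c"
    using assms squarefreeD by simp
qed

lemma squarefree_dvd_mult_if_gcd_dvd:
  fixes n a x y :: "'a :: semiring_gcd"
  assumes "squarefree n" "n dvd a * x" "gcd a n dvd y * x"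
  shows "n dvd y * x"
proof -
  define g where "g = gcd a n"
  have "n \<noteq> 0" "g \<noteq> 0"
    using assms(1) by (auto simp: g_def)
  have n_eq: "n = g * (n div g)" and a_eq: "a = g * (a div g)"
    by (simp_all add: g_def)
  have "coprime (n div g) (a div g)"
    using div_gcd_coprime[of n a] \<open>n \<noteq> 0\<close> by (simp add: g_def gcd.commute)
  have "g * (n div g) dvd g * (a div g * x)"
    using assms(2) by (simp add: g_def mult.assoc[symmetric])
  then have "n div g dvd a div g * x"
    using \<open>g \<noteq> 0\<close> by simp
  then have "n div g dvd y * x"
    using \<open>coprime (n div g) (a div g)\<close> by (simp add: coprime_dvd_mult_right_iff)
  moreover have "coprime g (n div g)"
    using assms(1) by (simp add: g_def squarefree_imp_coprime_div)
  ultimately have "g * (n div g) dvd y * x"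
    using assms(3) unfolding g_def by (intro divides_mult)
  then show ?thesis
    using n_eq by simp
qed

lemma squarefree_int_of_nat:
  assumes "squarefree n"
  shows "squarefree (int n)"
proof (rule squarefreeI)
  fix x :: int assume "x ^ 2 dvd int n"
  then have "int (nat \<bar>x\<bar> ^ 2) dvd int n"
    by simp
  then have "nat \<bar>x\<bar> ^ 2 dvd n"
    by (simp only: int_dvd_int_iff)
  then have "nat \<bar>x\<bar> = 1"
    using squarefreeD[OF assms] by simp
  then show "x dvd 1"
    by (simp add: zdvd1_eq)
qed

text \<open>This is the only place where square-freeness is used.\<close>

lemma kappa_eq_lcm_mord:
  assumes "squarefree n" "coprime r (int n)" "d dvd n" "gcd (r - 1) (int n) dvd int d"
  shows "kappa n r t = lcm (kappa d r t) (mord n r)"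
proof (rule dvd_antisym)
  have "n > 0"
    using assms(1) by (auto intro: gr0I)
  have "d > 0"
    using \<open>n > 0\<close> assms(3) by (rule dvd_pos_nat)
  have "coprime r (int d)"
    using assms(2,3) by (rule coprime_int_dvd)
  define L where "L = lcm (kappa d r t) (mord n r)"
  have "int n dvd r ^ L - 1"
    using mord_dvd_iff[OF \<open>n > 0\<close> assms(2), of L] unfolding L_def by simp
  moreover have "int n dvd t * S L r"
  proof (rule squarefree_dvd_mult_if_gcd_dvd[OF squarefree_int_of_nat[OF assms(1)]])
    show "int n dvd (r - 1) * S L r"
      using \<open>int n dvd r ^ L - 1\<close> by (simp only: S_geometric)
    have "int d dvd t * S L r"
      using kappa_dvd_iff[OF \<open>d > 0\<close> \<open>coprime r (int d)\<close>, of L t] unfolding L_def by simp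
    then show "gcd (r - 1) (int n) dvd t * S L r"
      using assms(4) by (rule dvd_trans[rotated])
  qed
  ultimately show "kappa n r t dvd L"
    using kappa_dvd_iff[OF \<open>n > 0\<close> assms(2)] by blast
  have "mord n r dvd kappa n r t"
    using kappa_dvd_iff[OF \<open>n > 0\<close> assms(2), of "kappa n r t" t] mord_dvd_iff[OF \<open>n > 0\<close> assms(2)]
    by simp
  then show "L dvd kappa n r t"
    unfolding L_def using kappa_dvd_kappa[OF \<open>n > 0\<close> assms(2,3)] by simp
qed

locale squarefree_dihedral =
  fixes n :: nat and r t :: int
  assumes squarefree: "squarefree n" and coprime: "coprime r (int n)"
begin

abbreviation gcd_pow :: "nat \<Rightarrow> nat" where
  "gcd_pow k \<equiv> nat (gcd (r ^ k - 1) (int n))"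

abbreviation cofactor :: "nat \<Rightarrow> nat" where
  "cofactor d \<equiv> mord n r div gcd (kappa d r t) (mord n r)"

abbreviation contributing :: "nat set" where
  "contributing \<equiv> {k\<in>{0<..kappa n r t}. gcd (r ^ k - 1) (int n) dvd t * S k r}"

abbreviation index_pairs :: "(nat \<times> nat) set" where
  "index_pairs \<equiv> {(d, l). 0 < d \<and> 0 < l \<and> d dvd n \<and> l dvd cofactor d
                   \<and> gcd (r ^ (l * kappa d r t) - 1) (int n) = int d}"

abbreviation gcd_class :: "nat \<Rightarrow> nat \<Rightarrow> nat set" where
  "gcd_class d l \<equiv> {j\<in>{0<..cofactor d}. gcd j (cofactor d) = l}"

lemma n_pos: "n > 0"
  using squarefree by (auto intro: gr0I)

lemma gcd_pow_pos: "gcd_pow k > 0"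
  using n_pos by simp

lemma gcd_pow_dvd: "gcd_pow k dvd n"
proof -
  have "int (gcd_pow k) dvd int n"
    by simp
  then show ?thesis
    by (simp only: int_dvd_int_iff)
qed

lemma cofactor_pos: "cofactor d > 0"
  using mord_pos[OF n_pos coprime] by (simp add: div_greater_zero_iff gcd_le2_nat)

lemma kappa_divisor_pos: "d dvd n \<Longrightarrow> d > 0 \<Longrightarrow> kappa d r t > 0"
  using kappa_pos coprime_int_dvd[OF coprime] by blast

lemma gcd_pow_mult_kappa: "gcd_pow (j * kappa d r t) = gcd_pow (gcd j (cofactor d) * kappa d r t)"
  using gcd_pow_mult_minus_one[OF n_pos coprime] by simp

lemma kappa_eq_mult_cofactor:
  assumes "(d, l) \<in> index_pairs"
  shows "kappa n r t = kappa d r t * cofactor d"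
proof -
  have "d dvd n" and d_eq: "gcd (r ^ (l * kappa d r t) - 1) (int n) = int d"
    using assms by simp_all
  have "r - 1 dvd r ^ (l * kappa d r t) - 1"
    using S_geometric[of r "l * kappa d r t"] by (metis dvd_triv_left)
  then have "gcd (r - 1) (int n) dvd r ^ (l * kappa d r t) - 1"
    by (rule dvd_trans[OF gcd_dvd1])
  then have "gcd (r - 1) (int n) dvd int d"
    unfolding d_eq[symmetric] by simp
  then have "kappa n r t = lcm (kappa d r t) (mord n r)"
    by (rule kappa_eq_lcm_mord[OF squarefree coprime \<open>d dvd n\<close>])
  then show ?thesis
    by (simp add: lcm_nat_def div_mult_swap)
qed

lemma contributing_iff:
  "k \<in> contributing \<longleftrightarrow> 0 < k \<and> k \<le> kappa n r t \<and> kappa (gcd_pow k) r t dvd k"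
proof -
  have "int (gcd_pow k) dvd r ^ k - 1"
    by simp
  then have "int (gcd_pow k) dvd t * S k r \<longleftrightarrow> kappa (gcd_pow k) r t dvd k"
    using kappa_dvd_iff[OF gcd_pow_pos coprime_int_dvd[OF coprime gcd_pow_dvd]] by blast
  then show ?thesis
    by simp
qed

lemma mult_kappa_in_contributing:
  assumes "(d, l) \<in> index_pairs" "j \<in> gcd_class d l"
  shows "j * kappa d r t \<in> contributing" "gcd_pow (j * kappa d r t) = d"
proof -
  show "gcd_pow (j * kappa d r t) = d"
    using assms gcd_pow_mult_kappa[of j d] by simp
  moreover have "j * kappa d r t \<le> kappa n r t"
    using assms(2) kappa_eq_mult_cofactor[OF assms(1)] by simp
  moreover have "0 < j * kappa d r t"
    using assms kappa_divisor_pos by simp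
  ultimately show "j * kappa d r t \<in> contributing"
    unfolding contributing_iff by simp
qed

lemma contributing_decompose:
  assumes "k \<in> contributing"
  defines "d \<equiv> gcd_pow k"
  defines "j \<equiv> k div kappa d r t"
  shows "(d, gcd j (cofactor d)) \<in> index_pairs" "j \<in> gcd_class d (gcd j (cofactor d))"
    "k = j * kappa d r t"
proof -
  have "d > 0" "d dvd n"
    unfolding d_def by (rule gcd_pow_pos, rule gcd_pow_dvd)
  then have "kappa d r t > 0"
    by (simp add: kappa_divisor_pos)
  have k: "0 < k" "k \<le> kappa n r t" "kappa d r t dvd k"
    using assms(1) unfolding contributing_iff d_def by simp_all
  then show k_eq: "k = j * kappa d r t"
    unfolding j_def by simp
  have "gcd_pow (gcd j (cofactor d) * kappa d r t) = d"
    using gcd_pow_mult_kappa[of j d] k_eq unfolding d_def by simp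
  then have "gcd (r ^ (gcd j (cofactor d) * kappa d r t) - 1) (int n) = int d"
    by (metis gcd_ge_0_int int_nat_eq)
  then show pair: "(d, gcd j (cofactor d)) \<in> index_pairs"
    using \<open>d > 0\<close> \<open>d dvd n\<close> cofactor_pos[of d] by simp
  have "j * kappa d r t \<le> cofactor d * kappa d r t"
    using k(2) k_eq kappa_eq_mult_cofactor[OF pair] by (simp add: mult.commute)
  then have "j \<le> cofactor d"
    using \<open>kappa d r t > 0\<close> by simp
  moreover have "j > 0"
    using k(1) k_eq by (simp add: gr0I)
  ultimately show "j \<in> gcd_class d (gcd j (cofactor d))"
    by simp
qed

lemma bij_betw_contributing:
  "bij_betw (\<lambda>((d, l), j). j * kappa d r t) (SIGMA (d, l):index_pairs. gcd_class d l) contributing"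
proof -
  define decomp where "decomp k =
    (let d = gcd_pow k; j = k div kappa d r t in ((d, gcd j (cofactor d)), j))" for k
  let ?h = "\<lambda>((d, l), j). j * kappa d r t"
  show ?thesis
  proof (rule bij_betw_byWitness[where f' = decomp])
    show "\<forall>x\<in>SIGMA (d, l):index_pairs. gcd_class d l. decomp (?h x) = x"
    proof
      fix x assume "x \<in> (SIGMA (d, l):index_pairs. gcd_class d l)"
      then obtain d l j where x: "x = ((d, l), j)" and dl: "(d, l) \<in> index_pairs"
        and j: "j \<in> gcd_class d l"
        by auto
      have "kappa d r t > 0"
        using dl kappa_divisor_pos by simp
      then show "decomp (?h x) = x"
        using mult_kappa_in_contributing(2)[OF dl j] j x by (simp add: decomp_def Let_def)
    qed
    show "?h ` (SIGMA (d, l):index_pairs. gcd_class d l) \<subseteq> contributing"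
    proof
      fix k assume "k \<in> ?h ` (SIGMA (d, l):index_pairs. gcd_class d l)"
      then obtain d l j where "k = j * kappa d r t" "(d, l) \<in> index_pairs" "j \<in> gcd_class d l"
        by auto
      then show "k \<in> contributing"
        using mult_kappa_in_contributing(1) by blast
    qed
    show "\<forall>k\<in>contributing. ?h (decomp k) = k"
      using contributing_iff by (simp add: decomp_def Let_def)
    show "decomp ` contributing \<subseteq> (SIGMA (d, l):index_pairs. gcd_class d l)"
    proof
      fix x assume "x \<in> decomp ` contributing"
      then obtain k where k: "k \<in> contributing" and x: "x = decomp k"
        by blast
      show "x \<in> (SIGMA (d, l):index_pairs. gcd_class d l)"
        using contributing_decompose(1,2)[OF k] unfolding x decomp_def Let_def
        by (simp only: mem_Sigma_iff case_prod_conv)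
    qed
  qed
qed

lemma finite_index_pairs: "finite index_pairs"
proof (rule finite_subset)
  show "index_pairs \<subseteq> {..n} \<times> {..mord n r}"
  proof
    fix p assume "p \<in> index_pairs"
    then obtain d l where p: "p = (d, l)" "d dvd n" "l dvd cofactor d"
      by blast
    then have "d \<le> n" "l \<le> cofactor d"
      using n_pos cofactor_pos[of d] by (simp_all add: dvd_imp_le)
    moreover have "cofactor d \<le> mord n r"
      by (rule div_le_dividend)
    ultimately show "p \<in> {..n} \<times> {..mord n r}"
      using p(1) by (simp add: le_trans[of l])
  qed
qed simp

lemma sum_contributing_eq:
  "(\<Sum>k\<in>contributing. gcd_pow k) =
    (\<Sum>(d, l)\<in>index_pairs. d * totient (mord n r div (l * gcd (kappa d r t) (mord n r))))"
proof -
  let ?h = "\<lambda>((d, l), j). j * kappa d r t"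
  have "(\<Sum>k\<in>contributing. gcd_pow k) =
      (\<Sum>x\<in>(SIGMA (d, l):index_pairs. gcd_class d l). gcd_pow (?h x))"
    by (rule sum.reindex_bij_betw[OF bij_betw_contributing, symmetric])
  also have "\<dots> = (\<Sum>(p, j)\<in>(SIGMA (d, l):index_pairs. gcd_class d l). fst p)"
  proof (rule sum.cong[OF refl])
    fix x assume "x \<in> (SIGMA (d, l):index_pairs. gcd_class d l)"
    then obtain d l j where "x = ((d, l), j)" "(d, l) \<in> index_pairs" "j \<in> gcd_class d l"
      by auto
    then show "gcd_pow (?h x) = (\<lambda>(p, j). fst p) x"
      using mult_kappa_in_contributing(2) by simp
  qed
  also have "\<dots> = (\<Sum>p\<in>index_pairs. \<Sum>j\<in>(\<lambda>(d, l). gcd_class d l) p. fst p)"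
    using finite_index_pairs by (intro sum.Sigma[symmetric]) auto
  also have "\<dots> = (\<Sum>(d, l)\<in>index_pairs. d * totient (mord n r div (l * gcd (kappa d r t) (mord n r))))"
  proof (rule sum.cong[OF refl])
    fix p assume "p \<in> index_pairs"
    then obtain d l where p: "p = (d, l)" and "l dvd cofactor d"
      by auto
    then have "card (gcd_class d l) = totient (cofactor d div l)"
      by (intro card_gcd_eq_totient cofactor_pos)
    also have "cofactor d div l = mord n r div (l * gcd (kappa d r t) (mord n r))"
      by (metis div_mult2_eq mult.commute)
    finally show "(\<Sum>j\<in>(\<lambda>(d, l). gcd_class d l) p. fst p) =
        (\<lambda>(d, l). d * totient (mord n r div (l * gcd (kappa d r t) (mord n r)))) p"
      using p by simp
  qed
  finally show ?thesis .
qed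

end

theorem lemma4p3:
  fixes n :: nat and r t :: int
  assumes "n > 1" and "squarefree n" and "coprime r (int n)"
  shows "real (num_cycles (V n) (dihedral_aut n r t)) =
    (\<Sum>(d, l) \<in> {(d, l). 0 < d \<and> 0 < l \<and> d dvd n
                  \<and> l dvd (mord n r div gcd (kappa d r t) (mord n r))
                  \<and> gcd (r ^ (l * kappa d r t) - 1) (int n) = int d}.
       real d / real (kappa n r t) *
       real (totient (mord n r div (l * gcd (kappa d r t) (mord n r)))))"
proof -
  interpret squarefree_dihedral n r t
    using assms(2,3) by unfold_locales
  let ?c = "num_cycles (V n) (dihedral_aut n r t)"
  let ?f = "\<lambda>d l. d * totient (mord n r div (l * gcd (kappa d r t) (mord n r)))"
  have "kappa n r t * ?c = (\<Sum>(d, l)\<in>index_pairs. ?f d l)"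
    using Burnside_dihedral_aut[OF n_pos coprime] sum_contributing_eq by simp
  then have "real (kappa n r t) * real ?c = (\<Sum>(d, l)\<in>index_pairs. real (?f d l))"
    by (metis (no_types, lifting) of_nat_mult of_nat_sum split_beta sum.cong)
  moreover have "kappa n r t > 0"
    using kappa_pos[OF n_pos coprime] .
  ultimately show ?thesis
    by (simp add: sum_divide_distrib[symmetric] split_beta eq_divide_eq mult.commute)
qed

end
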